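(* Let $\mathbb{K}$ be a field and let $\mathcal F=\{f_n(q)\}_{n=1}^\infty$ be a sequence of polynomials in $\mathbb{K}[q]$ satisfying $f_{mn}(q)=f_m(q)f_n(q^m)$ for all $m,n\in\mathbb N$. Suppose $\mathrm{supp}(\mathcal F)=S(P)$ for an infinite set $P$ of prime numbers, and $f_p(0)=1$ for all $p\in P$. Then there exists a formal power series $F_P(q)\in\mathbb{K}[[q]]$ such that \[ F_P(q)=\lim_{\substack{p\to\infty\\ p\in P}}f_p(q), \] i.e. for every $N$ there is $p_0$ such that $f_p(q)\equiv F_P(q)\pmod{q^N}$ for all $p\in P$ with $p\ge p_0$.
   Context: $\mathbb N=\{1,2,3,\dots\}$. $\mathrm{supp}(\mathcal F)=\{n\in\mathbb N: f_n(q)\ne0\}$. For a set $P$ of primes, $S(P)$ is the multiplicative semigroup of positive integers generated by $P$ (all finite products of elements of $P$, including $1$). For power series $g,h$, $g\equiv h\pmod{q^N}$ means their coefficients of $q^0,\dots,q^{N-1}$ agree. *)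

theory Defs
  imports "HOL-Computational_Algebra.Computational_Algebra"
begin

inductive_set gen_semigroup :: "nat set \<Rightarrow> nat set" for P :: "nat set" where
  one: "1 \<in> gen_semigroup P"
| mult: "n \<in> gen_semigroup P \<Longrightarrow> p \<in> P \<Longrightarrow> n * p \<in> gen_semigroup P"

definition supp_seq :: "(nat \<Rightarrow> 'a::zero) \<Rightarrow> nat set" where
  "supp_seq f = {n. n \<ge> 1 \<and> f n \<noteq> 0}"

end

theory Submission
  imports Defs
begin

text \<open>For p, q in P the product rule gives f_pq(x) = f_p(x) f_q(x^p) = f_q(x) f_p(x^q).
  Since f_q(0) = 1, the factor f_q(x^p) is 1 modulo x^p, so f_pq = f_p (mod x^p), and
  symmetrically f_pq = f_q (mod x^q). Hence the k-th coefficient of f_p does not depend on p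
  once p > k, and these stable coefficients form the limit.\<close>

lemma coeff_pcompose_monom_less:
  fixes r :: "'a::comm_semiring_1 poly"
  assumes "j < m"
  shows "coeff (pcompose r (monom 1 m)) j = (if j = 0 then coeff r 0 else 0)"
proof (induction r rule: pCons_induct)
  case 0
  then show ?case by simp
next
  case (pCons a p)
  have "pcompose (pCons a p) (monom 1 m) = [:a:] + monom 1 m * pcompose p (monom 1 m)"
    by (simp add: pcompose_pCons)
  then show ?case
    using assms by (auto simp: coeff_monom_mult coeff_pCons split: nat.splits)
qed

lemma coeff_mult_pcompose_monom_less:
  fixes a r :: "'a::comm_semiring_1 poly"
  assumes "k < m" "coeff r 0 = 1"
  shows "coeff (a * pcompose r (monom 1 m)) k = coeff a k"
proof -
  have "coeff (a * pcompose r (monom 1 m)) k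
        = (\<Sum>i\<le>k. coeff a i * coeff (pcompose r (monom 1 m)) (k - i))"
    by (simp add: coeff_mult)
  also have "\<dots> = (\<Sum>i\<le>k. if i = k then coeff a i else 0)"
    using assms by (intro sum.cong) (auto simp: coeff_pcompose_monom_less)
  also have "\<dots> = coeff a k"
    by simp
  finally show ?thesis .
qed

lemma coeff_eq_of_pcompose_multiplicative:
  fixes f :: "nat \<Rightarrow> 'a::comm_semiring_1 poly"
  assumes mult: "\<And>m n. m \<ge> 1 \<Longrightarrow> n \<ge> 1 \<Longrightarrow> f (m * n) = f m * pcompose (f n) (monom 1 m)"
    and const: "coeff (f m) 0 = 1" "coeff (f n) 0 = 1"
    and less: "k < m" "k < n"
  shows "coeff (f m) k = coeff (f n) k"
proof -
  have pos: "m \<ge> 1" "n \<ge> 1"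
    using less by auto
  have "coeff (f m) k = coeff (f (m * n)) k"
    using mult[OF pos] coeff_mult_pcompose_monom_less[OF less(1) const(2)] by simp
  also have "\<dots> = coeff (f (n * m)) k"
    by (simp add: mult.commute)
  also have "\<dots> = coeff (f n) k"
    using mult[OF pos(2,1)] coeff_mult_pcompose_monom_less[OF less(2) const(1)] by simp
  finally show ?thesis .
qed

lemma fps_limit_of_stable_coeffs:
  fixes g :: "nat \<Rightarrow> 'a::zero poly" and P :: "nat set"
  assumes "infinite P"
    and stable: "\<And>p q k. p \<in> P \<Longrightarrow> q \<in> P \<Longrightarrow> k < p \<Longrightarrow> k < q \<Longrightarrow> coeff (g p) k = coeff (g q) k"
  shows "\<exists>F :: 'a fps. \<forall>N. \<exists>p0. \<forall>p\<in>P. p \<ge> p0 \<longrightarrow> (\<forall>k<N. coeff (g p) k = fps_nth F k)"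
proof -
  have "\<forall>k. \<exists>p. p \<in> P \<and> k < p"
    using \<open>infinite P\<close> by (auto simp: infinite_nat_iff_unbounded)
  then obtain above :: "nat \<Rightarrow> nat" where above: "\<And>k. above k \<in> P \<and> k < above k"
    by metis
  show ?thesis
  proof (intro exI allI ballI impI)
    fix N p k
    assume "p \<in> P" "N \<le> p" "k < N"
    then show "coeff (g p) k = fps_nth (Abs_fps (\<lambda>k. coeff (g (above k)) k)) k"
      using stable[of p "above k" k] above[of k] by simp
  qed
qed

theorem mainTheorem5:
  fixes f :: "nat \<Rightarrow> 'a::field poly" and P :: "nat set"
  assumes mult: "\<And>m n. m \<ge> 1 \<Longrightarrow> n \<ge> 1 \<Longrightarrow>
                   f (m * n) = f m * pcompose (f n) (monom 1 m)"
    and primes: "\<forall>p\<in>P. prime p"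
    and inf: "infinite P"
    and supp: "supp_seq f = gen_semigroup P"
    and const: "\<And>p. p \<in> P \<Longrightarrow> poly (f p) 0 = 1"
  shows "\<exists>F :: 'a fps. \<forall>N. \<exists>p0. \<forall>p\<in>P. p \<ge> p0 \<longrightarrow>
           (\<forall>k<N. coeff (f p) k = fps_nth F k)"
proof (rule fps_limit_of_stable_coeffs[OF inf])
  fix p q k
  assume "p \<in> P" "q \<in> P" "k < p" "k < q"
  then show "coeff (f p) k = coeff (f q) k"
    by (intro coeff_eq_of_pcompose_multiplicative[OF mult]) (simp_all add: const flip: poly_0_coeff_0)
qed

end
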